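(* Fix $\eta>0$, $G\ge1$, a query $q$, a policy $\pi(\cdot\mid q)$ over responses, a verifier reward $r(o)\in\{0,1\}$, and a map $o\mapsto\bar z(o)$ from responses to unit vectors in $\mathbb{R}^d$. Let $B=(o_1,\dots,o_G)$ be i.i.d. samples from $\pi(\cdot\mid q)$, with $r_i=r(o_i)$, $\bar z_i=\bar z(o_i)$, $\tilde z_i=r_i\bar z_i$. Let $\mathcal P=\{i:r_i>0\}$, $R_{\mathrm{batch}}=\sum_{i=1}^G r_i$, define $v(\emptyset)=0$ and $v(S)=\log\det(I_{|S|}+\eta L_S)$ with $L_S=(\langle\tilde z_j,\tilde z_k\rangle)_{j,k\in S}$, and for $i\in\mathcal P$ let $$\phi_i=\sum_{S\subseteq\mathcal P\setminus\{i\}}\frac{|S|!\,(|\mathcal P|-|S|-1)!}{|\mathcal P|!}\left[v(S\cup\{i\})-v(S)\right].$$ Define redistributed rewards $\tilde r_i=R_{\mathrm{batch}}\,\phi_i/\sum_{j\in\mathcal P}\phi_j$ if $r_i>0$ and $\tilde r_i=0$ if $r_i=0$. Then $$\mathbb{E}_{B\sim\pi^G}\left[\frac1G\sum_{i=1}^G\tilde r_i\right]=\mathbb{E}_{o\sim\pi(\cdot\mid q)}[r(o)].$$ In contrast, for any (integrable) batch-dependent scores $d_i=d_i(B)$ and $\lambda\in\mathbb{R}$, the additively shaped rewards $r_i^{\mathrm{add}}=r_i+\lambda d_i$ satisfy $$\mathbb{E}_{B\sim\pi^G}\left[\frac1G\sum_{i=1}^G r_i^{\mathrm{add}}\right]=\mathbb{E}_{o\sim\pi(\cdot\mid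 q)}[r(o)]+\lambda\,\mathbb{E}_{B\sim\pi^G}\left[\frac1G\sum_{i=1}^G d_i\right].$$
   Context: This is the GCPO (Group Cooperative Policy Optimization) reward: $\phi_i$ is the Shapley value of rollout $i$ in the game on positive-reward rollouts with log-determinant "team value" $v$, and the verifier reward is redistributed proportionally to these Shapley values. The paper denotes the left-hand side of the first identity $J^{\Sigma}_{\mathrm{GCPO}}(\pi;q)$ and $\mathbb{E}_{o\sim\pi}[r(o)]$ by $J_{\mathrm{obj}}(\pi;q)$; $d_i$ is an arbitrary diversity bonus. *)

theory Defs
  imports "HOL-Probability.Probability" "Jordan_Normal_Form.Determinant"
begin

definition gram_mat :: "(nat \<Rightarrow> real vec) \<Rightarrow> nat set \<Rightarrow> real mat" where
  "gram_mat z S = Matrix.mat (card S) (card S)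
     (\<lambda>(j, k). z (sorted_list_of_set S ! j) \<bullet> z (sorted_list_of_set S ! k))"

definition team_value :: "real \<Rightarrow> (nat \<Rightarrow> real vec) \<Rightarrow> nat set \<Rightarrow> real" where
  "team_value \<eta> z S =
     (if S = {} then 0
      else ln (Determinant.det (1\<^sub>m (card S) + \<eta> \<cdot>\<^sub>m gram_mat z S)))"

definition shapley :: "(nat set \<Rightarrow> real) \<Rightarrow> nat set \<Rightarrow> nat \<Rightarrow> real" where
  "shapley v P i =
     (\<Sum>S\<in>Pow (P - {i}).
        (fact (card S) * fact (card P - card S - 1) / fact (card P)) *
        (v (insert i S) - v S))"

definition gcpo_reward ::
  "real \<Rightarrow> nat \<Rightarrow> ('o \<Rightarrow> real) \<Rightarrow> ('o \<Rightarrow> real vec) \<Rightarrow> (nat \<Rightarrow> 'o) \<Rightarrow> nat \<Rightarrow> real" where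
  "gcpo_reward \<eta> G r zbar B i =
     (let rs = (\<lambda>j. r (B j));
          zt = (\<lambda>j. rs j \<cdot>\<^sub>v zbar (B j));
          P = {j \<in> {..<G}. rs j > 0};
          Rb = (\<Sum>j<G. rs j);
          \<phi> = shapley (team_value \<eta> zt) P
      in if rs i > 0 then Rb * \<phi> i / (\<Sum>j\<in>P. \<phi> j) else 0)"

definition batch_pmf :: "nat \<Rightarrow> 'o pmf \<Rightarrow> (nat \<Rightarrow> 'o) pmf" where
  "batch_pmf G \<pi> = Pi_pmf {..<G} undefined (\<lambda>_. \<pi>)"

end

theory Submission
  imports Defs
begin

text \<open>
  Shapley values are efficient: for every game they sum to v P - v {}. For the log-determinant
  game v P = ln det (I + \<eta> L_P) is positive whenever P is nonempty, because I + \<eta> L_P is a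
  symmetric matrix dominating the identity whose diagonal entries are 1 + \<eta>, and such a matrix
  has determinant at least its top-left entry (induction on the dimension through the Schur
  complement of that entry, which again dominates the identity). So the redistributed rewards of
  every batch sum to R_batch, and the claim reduces to the fact that each rollout of the batch is
  distributed according to \<pi>. The additive shaping identity is linearity of expectation.
\<close>

definition quad_form :: "'a::comm_ring mat \<Rightarrow> (nat \<Rightarrow> 'a) \<Rightarrow> 'a" where
  "quad_form M x = (\<Sum>i<dim_row M. \<Sum>j<dim_row M. x i * M $$ (i, j) * x j)"

definition loewner_ge_1 :: "'a::linordered_field mat \<Rightarrow> bool" where
  "loewner_ge_1 M \<longleftrightarrow> (\<forall>x. (\<Sum>i<dim_row M. x i * x i) \<le> quad_form M x)"

definition schur_compl :: "'a::field mat \<Rightarrow> 'a mat" where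
  "schur_compl M = mat (dim_row M - 1) (dim_col M - 1)
     (\<lambda>(i, j). M $$ (Suc i, Suc j) - M $$ (Suc i, 0) / M $$ (0, 0) * M $$ (0, Suc j))"

lemma symmetric_mat_index:
  assumes "transpose_mat M = M" "i < dim_col M" "j < dim_row M"
  shows "M $$ (j, i) = M $$ (i, j)"
  by (metis assms index_transpose_mat(1))

lemma schur_compl_carrier: "M \<in> carrier_mat (Suc n) (Suc n) \<Longrightarrow> schur_compl M \<in> carrier_mat n n"
  unfolding schur_compl_def by auto

lemma schur_compl_index:
  "M \<in> carrier_mat (Suc n) (Suc n) \<Longrightarrow> i < n \<Longrightarrow> j < n \<Longrightarrow>
   schur_compl M $$ (i, j) = M $$ (Suc i, Suc j) - M $$ (Suc i, 0) / M $$ (0, 0) * M $$ (0, Suc j)"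
  unfolding schur_compl_def by auto

lemma transpose_schur_compl:
  assumes M: "M \<in> carrier_mat (Suc n) (Suc n)" and sym: "transpose_mat M = M"
  shows "transpose_mat (schur_compl M) = schur_compl M"
proof (rule eq_matI)
  fix i j assume "i < dim_row (schur_compl M)" "j < dim_col (schur_compl M)"
  then have ij: "i < n" "j < n" using schur_compl_carrier[OF M] by auto
  have "M $$ (Suc j, Suc i) = M $$ (Suc i, Suc j)" "M $$ (Suc j, 0) = M $$ (0, Suc j)"
    "M $$ (0, Suc i) = M $$ (Suc i, 0)"
    using ij M by (auto intro!: symmetric_mat_index[OF sym])
  then show "transpose_mat (schur_compl M) $$ (i, j) = schur_compl M $$ (i, j)"
    using ij M by (simp add: schur_compl_index schur_compl_carrier[OF M, THEN carrier_matD(1)]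
        schur_compl_carrier[OF M, THEN carrier_matD(2)])
qed (use schur_compl_carrier[OF M] in auto)

text \<open>Eliminating the first column by row operations leaves the Schur complement
  below the pivot.\<close>
lemma det_schur_compl:
  fixes M :: "'a::field mat"
  assumes M: "M \<in> carrier_mat (Suc n) (Suc n)" and a: "M $$ (0, 0) \<noteq> 0"
  shows "det M = M $$ (0, 0) * det (schur_compl M)"
proof -
  let ?a = "M $$ (0, 0)"
  define E :: "'a mat" where "E = mat (Suc n) (Suc n)
    (\<lambda>(i, j). if i = j then 1 else if j = 0 then - M $$ (i, 0) / ?a else 0)"
  have E: "E \<in> carrier_mat (Suc n) (Suc n)" unfolding E_def by auto
  have det_E: "det E = 1"
  proof -
    have "det E = prod_list (diag_mat E)"
      by (rule det_lower_triangular[OF _ E]) (auto simp: E_def)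
    also have "\<dots> = 1"
      unfolding prod_list_diag_prod using E by (auto simp: E_def intro!: prod.neutral)
    finally show ?thesis .
  qed
  define N where "N = E * M"
  have N: "N \<in> carrier_mat (Suc n) (Suc n)" unfolding N_def using E M by auto
  have N_index: "N $$ (i, j) =
      (if i = 0 then M $$ (0, j) else M $$ (i, j) - M $$ (i, 0) / ?a * M $$ (0, j))"
    if "i < Suc n" "j < Suc n" for i j
  proof -
    have "N $$ (i, j) = (\<Sum>k<Suc n. E $$ (i, k) * M $$ (k, j))"
      unfolding N_def using that E M by (auto simp: scalar_prod_def atLeast0LessThan)
    also have "\<dots> = (\<Sum>k<Suc n. (if k = i then M $$ (i, j) else 0)
        + (if k = 0 \<and> i \<noteq> 0 then - M $$ (i, 0) / ?a * M $$ (0, j) else 0))"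
      by (rule sum.cong) (use that in \<open>auto simp: E_def\<close>)
    finally show ?thesis using that by (simp add: sum.distrib)
  qed
  have "det M = det N"
    unfolding N_def det_mult[OF E M] det_E by simp
  also have "\<dots> = (\<Sum>i<Suc n. N $$ (i, 0) * cofactor N i 0)"
    by (rule laplace_expansion_column[OF N]) simp
  also have "\<dots> = ?a * cofactor N 0 0"
    by (subst sum.lessThan_Suc_shift) (simp add: N_index a)
  also have "cofactor N 0 0 = det (schur_compl M)"
  proof -
    have "mat_delete N 0 0 = schur_compl M"
      unfolding mat_delete_def schur_compl_def using N M by (auto simp: N_index)
    then show ?thesis unfolding cofactor_def by simp
  qed
  finally show ?thesis .
qed

text \<open>Completing the square in the first coordinate.\<close>
lemma quad_form_schur_compl:
  fixes M :: "'a::field mat" and y :: "nat \<Rightarrow> 'a"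
  assumes M: "M \<in> carrier_mat (Suc n) (Suc n)" and sym: "transpose_mat M = M"
    and a: "M $$ (0, 0) \<noteq> 0"
  defines "b \<equiv> (\<Sum>j<n. M $$ (0, Suc j) * y j)"
  shows "quad_form M (\<lambda>i. if i = 0 then - b / M $$ (0, 0) else y (i - 1))
       = quad_form (schur_compl M) y"
proof -
  let ?a = "M $$ (0, 0)" and ?t = "- b / M $$ (0, 0)"
  let ?x = "\<lambda>i. if i = 0 then ?t else y (i - 1)"
  let ?Q = "\<Sum>i<n. \<Sum>j<n. y i * M $$ (Suc i, Suc j) * y j"
  have col_row: "(\<Sum>i<n. y i * M $$ (Suc i, 0)) = b"
    unfolding b_def using M by (intro sum.cong refl) (simp add: symmetric_mat_index[OF sym])
  have "quad_form M ?x = ?t * ?a * ?t + (\<Sum>j<n. ?t * M $$ (0, Suc j) * y j)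
       + (\<Sum>i<n. y i * M $$ (Suc i, 0) * ?t + (\<Sum>j<n. y i * M $$ (Suc i, Suc j) * y j))"
    unfolding quad_form_def using M by (simp add: sum.lessThan_Suc_shift del: sum.lessThan_Suc)
  also have "\<dots> = ?t * ?a * ?t + ?t * b + (?t * b + ?Q)"
  proof -
    have row: "(\<Sum>j<n. ?t * M $$ (0, Suc j) * y j) = ?t * b"
      unfolding b_def sum_distrib_left by (simp add: mult.assoc)
    have col: "(\<Sum>i<n. y i * M $$ (Suc i, 0) * ?t) = ?t * b"
      unfolding col_row[symmetric] sum_distrib_left by (simp add: mult_ac)
    show ?thesis unfolding sum.distrib row col ..
  qed
  also have "\<dots> = ?Q - b * b / ?a"
    using a by (simp add: field_simps)
  also have "\<dots> = (\<Sum>i<n. \<Sum>j<n. y i * M $$ (Suc i, Suc j) * y j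
      - (y i * M $$ (Suc i, 0)) * (M $$ (0, Suc j) * y j) / ?a)"
    unfolding sum_subtractf sum_divide_distrib[symmetric] sum_product[symmetric] col_row b_def ..
  also have "\<dots> = quad_form (schur_compl M) y"
    unfolding quad_form_def schur_compl_carrier[OF M, THEN carrier_matD(1)]
    by (intro sum.cong refl) (simp add: schur_compl_index[OF M] field_simps)
  finally show ?thesis .
qed

lemma loewner_ge_1D:
  "loewner_ge_1 M \<Longrightarrow> M \<in> carrier_mat n n \<Longrightarrow> (\<Sum>i<n. x i * x i) \<le> quad_form M x"
  unfolding loewner_ge_1_def by (metis carrier_matD(1))

lemma loewner_ge_1_corner:
  fixes M :: "'a::linordered_field mat"
  assumes M: "M \<in> carrier_mat (Suc n) (Suc n)" and ge: "loewner_ge_1 M"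
  shows "1 \<le> M $$ (0, 0)"
proof -
  let ?e = "\<lambda>i. if i = 0 then 1 else 0 :: 'a"
  have "(\<Sum>i<Suc n. ?e i * ?e i) \<le> quad_form M ?e"
    by (rule loewner_ge_1D[OF ge M])
  moreover have "(\<Sum>i<Suc n. ?e i * ?e i) = 1"
    unfolding sum.lessThan_Suc_shift by simp
  moreover have "quad_form M ?e = M $$ (0, 0)"
    unfolding quad_form_def carrier_matD(1)[OF M] sum.lessThan_Suc_shift by simp
  ultimately show ?thesis by simp
qed

lemma loewner_ge_1_schur_compl:
  assumes M: "M \<in> carrier_mat (Suc n) (Suc n)" and sym: "transpose_mat M = M"
    and ge: "loewner_ge_1 M"
  shows "loewner_ge_1 (schur_compl M)"
  unfolding loewner_ge_1_def schur_compl_carrier[OF M, THEN carrier_matD(1)]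
proof
  fix y
  have a: "M $$ (0, 0) \<noteq> 0" using loewner_ge_1_corner[OF M ge] by simp
  define x where
    "x i = (if i = 0 then - (\<Sum>j<n. M $$ (0, Suc j) * y j) / M $$ (0, 0) else y (i - 1))" for i
  have "(\<Sum>i<n. y i * y i) \<le> x 0 * x 0 + (\<Sum>i<n. y i * y i)" by simp
  also have "\<dots> = (\<Sum>i<Suc n. x i * x i)"
    by (simp add: sum.lessThan_Suc_shift x_def del: sum.lessThan_Suc)
  also have "\<dots> \<le> quad_form M x"
    by (rule loewner_ge_1D[OF ge M])
  also have "\<dots> = quad_form (schur_compl M) y"
    unfolding x_def by (rule quad_form_schur_compl[OF M sym a])
  finally show "(\<Sum>i<n. y i * y i) \<le> quad_form (schur_compl M) y" .
qed

lemma det_ge_1_if_loewner_ge_1: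
  assumes "M \<in> carrier_mat n n" "transpose_mat M = M" "loewner_ge_1 M"
  shows "1 \<le> det M"
  using assms
proof (induction n arbitrary: M)
  case 0
  then show ?case by simp
next
  case (Suc n)
  have "1 \<le> M $$ (0, 0)" by (rule loewner_ge_1_corner[OF Suc.prems(1,3)])
  moreover have "1 \<le> det (schur_compl M)"
    using Suc.IH schur_compl_carrier transpose_schur_compl loewner_ge_1_schur_compl Suc.prems
    by blast
  ultimately show ?case
    using det_schur_compl[OF Suc.prems(1)] mult_mono[of 1 "M $$ (0, 0)" 1 "det (schur_compl M)"]
    by simp
qed

lemma det_ge_corner_if_loewner_ge_1:
  assumes M: "M \<in> carrier_mat (Suc n) (Suc n)" and sym: "transpose_mat M = M"
    and ge: "loewner_ge_1 M"
  shows "M $$ (0, 0) \<le> det M"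
proof -
  have a: "1 \<le> M $$ (0, 0)" by (rule loewner_ge_1_corner[OF M ge])
  have "1 \<le> det (schur_compl M)"
    using det_ge_1_if_loewner_ge_1 schur_compl_carrier[OF M] transpose_schur_compl[OF M sym]
      loewner_ge_1_schur_compl[OF M sym ge] by blast
  then show ?thesis
    using det_schur_compl[OF M] a mult_left_mono[of 1 "det (schur_compl M)" "M $$ (0, 0)"] by simp
qed

lemma transpose_one_plus_smult:
  assumes "A \<in> carrier_mat n n" "transpose_mat A = A"
  shows "transpose_mat (1\<^sub>m n + c \<cdot>\<^sub>m A) = 1\<^sub>m n + c \<cdot>\<^sub>m A"
  using assms by (intro eq_matI) (auto simp: symmetric_mat_index)

lemma quad_form_one_plus_smult:
  fixes A :: "'a::comm_ring_1 mat"
  assumes "A \<in> carrier_mat n n"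
  shows "quad_form (1\<^sub>m n + c \<cdot>\<^sub>m A) x = (\<Sum>i<n. x i * x i) + c * quad_form A x"
proof -
  have "quad_form (1\<^sub>m n + c \<cdot>\<^sub>m A) x
      = (\<Sum>i<n. \<Sum>j<n. (if i = j then x i * x j else 0) + c * (x i * A $$ (i, j) * x j))"
    unfolding quad_form_def using assms by (intro sum.cong refl) (auto simp: algebra_simps)
  also have "\<dots> = (\<Sum>i<n. x i * x i) + c * quad_form A x"
    unfolding quad_form_def using assms by (simp add: sum.distrib sum_distrib_left)
  finally show ?thesis .
qed

lemma gram_mat_carrier: "gram_mat z S \<in> carrier_mat (card S) (card S)"
  unfolding gram_mat_def by simp

lemma gram_mat_index:
  fixes z :: "nat \<Rightarrow> real vec"
  shows "i < card S \<Longrightarrow> j < card S \<Longrightarrow>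
   gram_mat z S $$ (i, j) = z (sorted_list_of_set S ! i) \<bullet> z (sorted_list_of_set S ! j)"
  unfolding gram_mat_def by simp

lemma transpose_gram_mat:
  fixes z :: "nat \<Rightarrow> real vec"
  assumes "\<And>j. z j \<in> carrier_vec d"
  shows "transpose_mat (gram_mat z S) = gram_mat z S"
  using gram_mat_carrier[of z S]
  by (intro eq_matI) (auto simp: gram_mat_index intro!: comm_scalar_prod assms)

text \<open>A Gram form is a sum of squares, one per coordinate.\<close>
lemma quad_form_gram_mat_nonneg:
  fixes z :: "nat \<Rightarrow> real vec"
  assumes "\<And>j. z j \<in> carrier_vec d"
  shows "0 \<le> quad_form (gram_mat z S) x"
proof -
  define u where "u i = z (sorted_list_of_set S ! i)" for i
  let ?k = "card S"
  have "quad_form (gram_mat z S) x = (\<Sum>i<?k. \<Sum>j<?k. x i * (u i \<bullet> u j) * x j)"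
    unfolding quad_form_def u_def using gram_mat_carrier[of z S] by (simp add: gram_mat_index)
  also have "\<dots> = (\<Sum>i<?k. \<Sum>j<?k. \<Sum>l<d. (x i * u i $ l) * (x j * u j $ l))"
    using carrier_vecD[OF assms] unfolding u_def
    by (simp add: scalar_prod_def sum_distrib_left sum_distrib_right mult_ac atLeast0LessThan)
  also have "\<dots> = (\<Sum>l<d. (\<Sum>i<?k. x i * u i $ l) * (\<Sum>j<?k. x j * u j $ l))"
    by (simp add: sum_product sum.swap[of _ "{..<d}"])
  also have "\<dots> \<ge> 0" by (intro sum_nonneg) simp
  finally show ?thesis .
qed

lemma loewner_ge_1_one_plus_gram_mat:
  fixes z :: "nat \<Rightarrow> real vec"
  assumes "0 \<le> \<eta>" "\<And>j. z j \<in> carrier_vec d"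
  shows "loewner_ge_1 (1\<^sub>m (card S) + \<eta> \<cdot>\<^sub>m gram_mat z S)"
  unfolding loewner_ge_1_def quad_form_one_plus_smult[OF gram_mat_carrier]
  using assms quad_form_gram_mat_nonneg[of z d] gram_mat_carrier[of z S] by simp

lemma team_value_pos:
  fixes z :: "nat \<Rightarrow> real vec"
  assumes "0 < \<eta>" "finite S" "S \<noteq> {}" "\<And>j. z j \<in> carrier_vec d"
    and unit: "\<And>j. j \<in> S \<Longrightarrow> z j \<bullet> z j = 1"
  shows "0 < team_value \<eta> z S"
proof -
  define M where "M = 1\<^sub>m (card S) + \<eta> \<cdot>\<^sub>m gram_mat z S"
  obtain n where n: "card S = Suc n"
    using assms(2,3) by (metis card_0_eq not0_implies_Suc)
  have M: "M \<in> carrier_mat (Suc n) (Suc n)"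
    unfolding M_def n[symmetric]
    by (intro add_carrier_mat smult_carrier_mat one_carrier_mat gram_mat_carrier)
  have "sorted_list_of_set S ! 0 \<in> S"
    using assms(2) n by (metis nth_mem length_sorted_list_of_set set_sorted_list_of_set zero_less_Suc)
  then have "M $$ (0, 0) = 1 + \<eta>"
    unfolding M_def using n gram_mat_carrier[of z S] by (simp add: gram_mat_index unit)
  moreover have "M $$ (0, 0) \<le> det M"
    using det_ge_corner_if_loewner_ge_1[OF M] assms(1)
      transpose_one_plus_smult[OF gram_mat_carrier transpose_gram_mat[OF assms(4)]]
      loewner_ge_1_one_plus_gram_mat[OF _ assms(4)]
    unfolding M_def by simp
  ultimately show ?thesis
    unfolding team_value_def M_def[symmetric] using assms(1,3) by simp
qed

definition shapley_weight :: "nat \<Rightarrow> nat \<Rightarrow> real" where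
  "shapley_weight p s = fact s * fact (p - s - 1) / fact p"

lemma shapley_eq_weight:
  "shapley v P i =
   (\<Sum>S\<in>Pow (P - {i}). shapley_weight (card P) (card S) * (v (insert i S) - v S))"
  unfolding shapley_def shapley_weight_def ..

text \<open>The net coefficient of v T in the sum of all Shapley values, for card T = t and
  card P = p.\<close>
lemma shapley_weight_net_coeff:
  assumes "0 < p" "t \<le> p"
  shows "real t * shapley_weight p (t - 1) - real (p - t) * shapley_weight p t
       = (if t = p then 1 else 0) - (if t = 0 then 1 else 0)"
proof -
  have p: "fact p = real p * fact (p - 1)"
    using assms(1) by (simp add: fact_reduce[of p])
  consider "t = 0" | "t = p" | "0 < t" "t < p" using assms by linarith
  then show ?thesis
  proof cases
    case 1
    then show ?thesis using assms(1) by (simp add: shapley_weight_def p)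
  next
    case 2
    then show ?thesis using assms(1) by (simp add: shapley_weight_def p)
  next
    case 3
    have "real t * shapley_weight p (t - 1) = fact t * fact (p - t) / fact p"
    proof -
      have "p - (t - 1) - 1 = p - t" using 3 by simp
      moreover have "real t * fact (t - 1) = fact t" using 3 by (simp add: fact_reduce[of t])
      ultimately show ?thesis unfolding shapley_weight_def by (simp add: mult.assoc[symmetric])
    qed
    moreover have "real (p - t) * shapley_weight p t = fact t * fact (p - t) / fact p"
    proof -
      have "real (p - t) * fact (p - t - 1) = fact (p - t)"
        using 3 by (simp add: fact_reduce[of "p - t"])
      then show ?thesis unfolding shapley_weight_def by (simp add: mult_ac)
    qed
    ultimately show ?thesis using 3 by simp
  qed
qed

lemma sum_Pow_remove_insert:
  assumes "finite P" "i \<in> P"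
  shows "(\<Sum>S\<in>Pow (P - {i}). f (insert i S)) = (\<Sum>T\<in>Pow P. if i \<in> T then f T else 0)"
proof -
  have "bij_betw (insert i) (Pow (P - {i})) {T \<in> Pow P. i \<in> T}"
    by (rule bij_betw_byWitness[where f' = "\<lambda>T. T - {i}"]) (use assms in auto)
  then have "(\<Sum>S\<in>Pow (P - {i}). f (insert i S)) = (\<Sum>T\<in>{T \<in> Pow P. i \<in> T}. f T)"
    by (rule sum.reindex_bij_betw)
  also have "\<dots> = (\<Sum>T\<in>Pow P. if i \<in> T then f T else 0)"
    using assms(1) by (intro sum.inter_filter) simp
  finally show ?thesis .
qed

lemma sum_Pow_remove:
  assumes "finite P"
  shows "(\<Sum>S\<in>Pow (P - {i}). f S) = (\<Sum>T\<in>Pow P. if i \<notin> T then f T else 0)"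
proof -
  have "Pow (P - {i}) = {T \<in> Pow P. i \<notin> T}" by auto
  then show ?thesis using assms by (simp only: sum.inter_filter finite_Pow_iff)
qed

lemma sum_sum_Pow_if:
  fixes f :: "'a set \<Rightarrow> 'b::semiring_1"
  assumes "finite P"
  shows "(\<Sum>i\<in>P. \<Sum>T\<in>Pow P. if Q i T then f T else 0)
       = (\<Sum>T\<in>Pow P. of_nat (card {i \<in> P. Q i T}) * f T)"
proof -
  have "(\<Sum>i\<in>P. if Q i T then f T else 0) = of_nat (card {i \<in> P. Q i T}) * f T" for T
  proof -
    have "(\<Sum>i\<in>P. if Q i T then f T else 0) = (\<Sum>i\<in>{i \<in> P. Q i T}. f T)"
      using assms by (rule sum.inter_filter[symmetric])
    then show ?thesis by simp
  qed
  then show ?thesis by (subst sum.swap) simp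
qed

lemma sum_coalitions_with_player:
  fixes w :: "nat \<Rightarrow> real"
  assumes fin: "finite P"
  shows "(\<Sum>i\<in>P. \<Sum>S\<in>Pow (P - {i}). w (card S) * v (insert i S))
       = (\<Sum>T\<in>Pow P. real (card T) * (w (card T - 1) * v T))"
proof -
  have "(\<Sum>S\<in>Pow (P - {i}). w (card S) * v (insert i S))
      = (\<Sum>T\<in>Pow P. if i \<in> T then w (card T - 1) * v T else 0)" if "i \<in> P" for i
  proof -
    have "(\<Sum>S\<in>Pow (P - {i}). w (card S) * v (insert i S))
        = (\<Sum>S\<in>Pow (P - {i}). w (card (insert i S) - 1) * v (insert i S))"
    proof (intro sum.cong refl)
      fix S assume "S \<in> Pow (P - {i})"
      then have "finite S" "i \<notin> S" using fin finite_subset by auto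
      then show "w (card S) * v (insert i S) = w (card (insert i S) - 1) * v (insert i S)"
        by simp
    qed
    also have "\<dots> = (\<Sum>T\<in>Pow P. if i \<in> T then w (card T - 1) * v T else 0)"
      by (rule sum_Pow_remove_insert[OF fin that])
    finally show ?thesis .
  qed
  then have "(\<Sum>i\<in>P. \<Sum>S\<in>Pow (P - {i}). w (card S) * v (insert i S))
      = (\<Sum>i\<in>P. \<Sum>T\<in>Pow P. if i \<in> T then w (card T - 1) * v T else 0)"
    by (rule sum.cong[OF refl])
  also have "\<dots> = (\<Sum>T\<in>Pow P. real (card {i \<in> P. i \<in> T}) * (w (card T - 1) * v T))"
    by (rule sum_sum_Pow_if[OF fin])
  also have "\<dots> = (\<Sum>T\<in>Pow P. real (card T) * (w (card T - 1) * v T))"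
  proof (intro sum.cong refl)
    fix T assume "T \<in> Pow P"
    then have "{i \<in> P. i \<in> T} = T" by auto
    then show "real (card {i \<in> P. i \<in> T}) * (w (card T - 1) * v T)
        = real (card T) * (w (card T - 1) * v T)" by simp
  qed
  finally show ?thesis .
qed

lemma sum_coalitions_without_player:
  fixes w :: "nat \<Rightarrow> real"
  assumes fin: "finite P"
  shows "(\<Sum>i\<in>P. \<Sum>S\<in>Pow (P - {i}). w (card S) * v S)
       = (\<Sum>T\<in>Pow P. real (card P - card T) * (w (card T) * v T))"
proof -
  have "(\<Sum>i\<in>P. \<Sum>S\<in>Pow (P - {i}). w (card S) * v S)
      = (\<Sum>T\<in>Pow P. real (card {i \<in> P. i \<notin> T}) * (w (card T) * v T))"
    unfolding sum_Pow_remove[OF fin] by (rule sum_sum_Pow_if[OF fin])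
  also have "\<dots> = (\<Sum>T\<in>Pow P. real (card P - card T) * (w (card T) * v T))"
  proof (intro sum.cong refl)
    fix T assume "T \<in> Pow P"
    then have sub: "T \<subseteq> P" by simp
    have "{i \<in> P. i \<notin> T} = P - T" by auto
    moreover have "card (P - T) = card P - card T"
      using card_Diff_subset[OF finite_subset[OF sub fin] sub] .
    ultimately show "real (card {i \<in> P. i \<notin> T}) * (w (card T) * v T)
        = real (card P - card T) * (w (card T) * v T)"
      by simp
  qed
  finally show ?thesis .
qed

theorem shapley_efficiency:
  assumes fin: "finite P" and ne: "P \<noteq> {}"
  shows "(\<Sum>i\<in>P. shapley v P i) = v P - v {}"
proof -
  let ?p = "card P"
  let ?w = "shapley_weight ?p"
  have "(\<Sum>i\<in>P. shapley v P i)
      = (\<Sum>T\<in>Pow P. (real (card T) * ?w (card T - 1) - real (?p - card T) * ?w (card T)) * v T)"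
    unfolding shapley_eq_weight right_diff_distrib sum_subtractf
      sum_coalitions_with_player[OF fin] sum_coalitions_without_player[OF fin]
    by (simp add: left_diff_distrib mult.assoc sum_subtractf)
  also have "\<dots> = (\<Sum>T\<in>Pow P. (if T = P then v T else 0) - (if T = {} then v T else 0))"
  proof (intro sum.cong refl)
    fix T assume "T \<in> Pow P"
    then have sub: "T \<subseteq> P" and "finite T" using fin finite_subset by auto
    then have "card T \<le> ?p" "card T = ?p \<longleftrightarrow> T = P" "card T = 0 \<longleftrightarrow> T = {}"
      using card_mono[OF fin sub] card_subset_eq[OF fin sub] by auto
    moreover have "0 < ?p" using fin ne by (simp add: card_gt_0_iff)
    ultimately show "(real (card T) * ?w (card T - 1) - real (?p - card T) * ?w (card T)) * v T
        = (if T = P then v T else 0) - (if T = {} then v T else 0)"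
      using shapley_weight_net_coeff[of ?p "card T"] by simp
  qed
  also have "\<dots> = v P - v {}"
    using fin by (simp add: sum_subtractf)
  finally show ?thesis .
qed

lemma sum_gcpo_reward:
  fixes zbar :: "'o \<Rightarrow> real vec"
  assumes eta: "0 < \<eta>" and r01: "\<And>x. r x \<in> {0, 1}"
    and dim: "\<And>x. dim_vec (zbar x) = d" and unit: "\<And>x. zbar x \<bullet> zbar x = 1"
  shows "(\<Sum>i<G. gcpo_reward \<eta> G r zbar B i) = (\<Sum>i<G. r (B i))"
proof -
  define z where "z j = r (B j) \<cdot>\<^sub>v zbar (B j)" for j
  define P where "P = {j \<in> {..<G}. 0 < r (B j)}"
  define \<phi> where "\<phi> = shapley (team_value \<eta> z) P"
  let ?R = "\<Sum>j<G. r (B j)"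
  have finite_P: "finite P" unfolding P_def by simp
  have reward: "gcpo_reward \<eta> G r zbar B i = (if 0 < r (B i) then ?R * \<phi> i / (\<Sum>j\<in>P. \<phi> j) else 0)"
    for i unfolding gcpo_reward_def Let_def z_def P_def \<phi>_def by simp
  have "(\<Sum>i<G. gcpo_reward \<eta> G r zbar B i) = (\<Sum>i\<in>P. ?R * \<phi> i / (\<Sum>j\<in>P. \<phi> j))"
    unfolding reward P_def by (rule sum.inter_filter[symmetric]) simp
  also have "\<dots> = ?R * (\<Sum>i\<in>P. \<phi> i) / (\<Sum>j\<in>P. \<phi> j)"
    unfolding sum_divide_distrib[symmetric] sum_distrib_left ..
  also have "\<dots> = ?R"
  proof (cases "P = {}")
    case True
    then have "r (B j) = 0" if "j < G" for j
      using that r01[of "B j"] unfolding P_def by auto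
    then show ?thesis by simp
  next
    case False
    have "z j \<in> carrier_vec d" for j
      unfolding z_def carrier_vec_def by (simp add: dim)
    moreover have "z j \<bullet> z j = 1" if "j \<in> P" for j
    proof -
      have "r (B j) = 1" using that r01[of "B j"] unfolding P_def by auto
      then show ?thesis unfolding z_def by (simp add: unit)
    qed
    ultimately have "0 < team_value \<eta> z P"
      by (rule team_value_pos[OF eta finite_P False])
    moreover have "(\<Sum>j\<in>P. \<phi> j) = team_value \<eta> z P"
      unfolding \<phi>_def using shapley_efficiency[OF _ False] by (simp add: P_def team_value_def)
    ultimately show ?thesis by simp
  qed
  finally show ?thesis .
qed

lemma map_pmf_batch_pmf_component: "i < G \<Longrightarrow> map_pmf (\<lambda>B. B i) (batch_pmf G \<pi>) = \<pi>"
  unfolding batch_pmf_def by (simp add: Pi_pmf_component)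

lemma integrable_batch_pmf_component:
  fixes f :: "'o \<Rightarrow> real"
  shows "integrable (measure_pmf \<pi>) f \<Longrightarrow> i < G \<Longrightarrow>
   integrable (measure_pmf (batch_pmf G \<pi>)) (\<lambda>B. f (B i))"
  using integrable_map_pmf_eq[of "\<lambda>B. B i" "batch_pmf G \<pi>" f]
  by (simp add: map_pmf_batch_pmf_component)

lemma expectation_batch_pmf_component:
  fixes f :: "'o \<Rightarrow> real"
  shows "i < G \<Longrightarrow>
   measure_pmf.expectation (batch_pmf G \<pi>) (\<lambda>B. f (B i)) = measure_pmf.expectation \<pi> f"
  using integral_map_pmf[of "\<lambda>B. B i" "batch_pmf G \<pi>" f]
  by (simp add: map_pmf_batch_pmf_component)

lemma integrable_batch_mean:
  fixes f :: "'o \<Rightarrow> real"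
  assumes "integrable (measure_pmf \<pi>) f"
  shows "integrable (measure_pmf (batch_pmf G \<pi>)) (\<lambda>B. (1 / real G) * (\<Sum>i<G. f (B i)))"
  using assms by (auto intro!: integrable_batch_pmf_component)

lemma expectation_batch_mean:
  fixes f :: "'o \<Rightarrow> real"
  assumes "0 < G" "integrable (measure_pmf \<pi>) f"
  shows "measure_pmf.expectation (batch_pmf G \<pi>) (\<lambda>B. (1 / real G) * (\<Sum>i<G. f (B i)))
       = measure_pmf.expectation \<pi> f"
proof -
  have "measure_pmf.expectation (batch_pmf G \<pi>) (\<lambda>B. \<Sum>i<G. f (B i))
      = (\<Sum>i<G. measure_pmf.expectation (batch_pmf G \<pi>) (\<lambda>B. f (B i)))"
    by (rule Bochner_Integration.integral_sum) (auto intro: integrable_batch_pmf_component[OF assms(2)])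
  then show ?thesis
    unfolding integral_mult_right_zero using assms(1) by (simp add: expectation_batch_pmf_component)
qed

lemma expectation_batch_mean_add:
  fixes f :: "'o \<Rightarrow> real" and g :: "nat \<Rightarrow> (nat \<Rightarrow> 'o) \<Rightarrow> real"
  assumes f: "integrable (measure_pmf \<pi>) f"
    and g: "\<forall>i<G. integrable (measure_pmf (batch_pmf G \<pi>)) (g i)"
  shows "measure_pmf.expectation (batch_pmf G \<pi>) (\<lambda>B. (1 / real G) * (\<Sum>i<G. f (B i) + c * g i B))
       = measure_pmf.expectation (batch_pmf G \<pi>) (\<lambda>B. (1 / real G) * (\<Sum>i<G. f (B i)))
         + c * measure_pmf.expectation (batch_pmf G \<pi>) (\<lambda>B. (1 / real G) * (\<Sum>i<G. g i B))"
proof -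
  let ?E = "measure_pmf.expectation (batch_pmf G \<pi>)"
  have "?E (\<lambda>B. (1 / real G) * (\<Sum>i<G. f (B i) + c * g i B))
      = ?E (\<lambda>B. (1 / real G) * (\<Sum>i<G. f (B i)) + c * ((1 / real G) * (\<Sum>i<G. g i B)))"
    by (simp add: sum.distrib sum_distrib_left algebra_simps)
  also have "\<dots> = ?E (\<lambda>B. (1 / real G) * (\<Sum>i<G. f (B i)))
      + ?E (\<lambda>B. c * ((1 / real G) * (\<Sum>i<G. g i B)))"
    using g by (intro Bochner_Integration.integral_add integrable_batch_mean[OF f]
        integrable_mult_right integrable_sum) auto
  finally show ?thesis by (simp only: integral_mult_right_zero)
qed

theorem proposition2:
  fixes \<eta> :: real and G d :: nat and \<pi> :: "'o pmf"
    and r :: "'o \<Rightarrow> real" and zbar :: "'o \<Rightarrow> real vec"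
  assumes "\<eta> > 0" and "G \<ge> 1"
    and "\<And>x. r x \<in> {0, 1}"
    and "\<And>x. dim_vec (zbar x) = d"
    and "\<And>x. zbar x \<bullet> zbar x = 1"
  shows "(measure_pmf.expectation (batch_pmf G \<pi>)
           (\<lambda>B. (1 / real G) * (\<Sum>i<G. gcpo_reward \<eta> G r zbar B i))
         = measure_pmf.expectation \<pi> r) \<and>
         (\<forall>(ds :: nat \<Rightarrow> (nat \<Rightarrow> 'o) \<Rightarrow> real) (lam::real).
           (\<forall>i<G. integrable (measure_pmf (batch_pmf G \<pi>)) (ds i)) \<longrightarrow>
           measure_pmf.expectation (batch_pmf G \<pi>)
             (\<lambda>B. (1 / real G) * (\<Sum>i<G. r (B i) + lam * ds i B))
           = measure_pmf.expectation \<pi> r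
             + lam * measure_pmf.expectation (batch_pmf G \<pi>)
                     (\<lambda>B. (1 / real G) * (\<Sum>i<G. ds i B)))"
proof -
  have G: "0 < G" using assms(2) by simp
  have "norm (r x) \<le> 1" for x using assms(3)[of x] by auto
  then have r: "integrable (measure_pmf \<pi>) r"
    by (intro measure_pmf.integrable_const_bound[where B = 1] AE_pmfI) simp_all
  show ?thesis
  proof (intro conjI allI impI)
    show "measure_pmf.expectation (batch_pmf G \<pi>)
        (\<lambda>B. (1 / real G) * (\<Sum>i<G. gcpo_reward \<eta> G r zbar B i)) = measure_pmf.expectation \<pi> r"
      unfolding sum_gcpo_reward[OF assms(1,3,4,5)] by (rule expectation_batch_mean[OF G r])
  next
    fix ds :: "nat \<Rightarrow> (nat \<Rightarrow> 'o) \<Rightarrow> real" and lam :: real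
    assume "\<forall>i<G. integrable (measure_pmf (batch_pmf G \<pi>)) (ds i)"
    from expectation_batch_mean_add[OF r this, of lam]
    show "measure_pmf.expectation (batch_pmf G \<pi>) (\<lambda>B. (1 / real G) * (\<Sum>i<G. r (B i) + lam * ds i B))
        = measure_pmf.expectation \<pi> r
          + lam * measure_pmf.expectation (batch_pmf G \<pi>) (\<lambda>B. (1 / real G) * (\<Sum>i<G. ds i B))"
      unfolding expectation_batch_mean[OF G r] .
  qed
qed

end
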